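(* Let $q$ be a prime power and $\mathcal{C}\subseteq\mathbb{F}_q^n$ a linear code of dimension $k$. Let $U\subseteq[n]$ be the set of coordinates $i$ such that some codeword of $\mathcal{C}$ is nonzero at $i$, and for $i\in U$ let $w_i = \min\{\mathrm{wt}(c) : c\in\mathcal{C},\ c_i\neq 0\}$. Then $\sum_{i\in U} \frac{1}{w_i} \le k$.
   Context: $\mathrm{wt}(c)$ is the number of nonzero coordinates of $c$. *)

theory Defs
  imports "HOL-Analysis.Analysis"
begin

definition wt :: "('a::zero) ^ 'n \<Rightarrow> nat" where
  "wt c = card {i. c $ i \<noteq> 0}"

end

theory Submission
  imports Defs
begin

text \<open>Take a nonzero codeword c of least weight and puncture the code on its support S (zero out
  those coordinates). This linear map kills c, so the dimension drops by at least one. Every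
  coordinate of S has w i \<ge> wt c = |S|, so S contributes at most 1 to the sum. For a coordinate
  outside S, puncturing a codeword does not increase its weight and keeps it nonzero there, so
  w i can only shrink and the remaining terms are bounded by the sum for the punctured code;
  induction on the dimension finishes the argument.\<close>

definition support :: "('a::zero) ^ 'n \<Rightarrow> 'n set" where
  "support c = {i. c $ i \<noteq> 0}"

definition code_support :: "(('a::zero) ^ 'n) set \<Rightarrow> 'n set" where
  "code_support C = {i. \<exists>c\<in>C. c $ i \<noteq> 0}"

definition min_wt :: "(('a::zero) ^ 'n) set \<Rightarrow> 'n \<Rightarrow> nat" where
  "min_wt C i = Min {wt c | c. c \<in> C \<and> c $ i \<noteq> 0}"

definition zero_on :: "'n set \<Rightarrow> ('a::zero) ^ 'n \<Rightarrow> 'a ^ 'n" where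
  "zero_on S x = (\<chi> i. if i \<in> S then 0 else x $ i)"

lemma wt_eq_card_support: "wt c = card (support c)"
  by (simp add: wt_def support_def)

lemma wt_le_card: "wt (c :: ('a::zero) ^ 'n) \<le> CARD('n)"
  unfolding wt_def by (rule card_mono) auto

lemma wt_pos:
  fixes x :: "('a::zero) ^ 'n"
  assumes "x $ i \<noteq> 0"
  shows "0 < wt x"
  using assms by (auto simp: wt_def card_gt_0_iff)

lemma wt_zero_on_le: "wt (zero_on S x) \<le> wt x"
  unfolding wt_def by (rule card_mono) (auto simp: zero_on_def)

lemma zero_on_nth_notin: "i \<notin> S \<Longrightarrow> zero_on S x $ i = x $ i"
  by (simp add: zero_on_def)

lemma zero_on_support_self: "zero_on (support c) c = 0"
  by (simp add: zero_on_def support_def vec_eq_iff)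

lemma linear_zero_on: "Vector_Spaces.linear (*s) (*s) (zero_on S :: ('a::field) ^ 'n \<Rightarrow> _)"
  by unfold_locales (auto simp: zero_on_def vec_eq_iff algebra_simps)

lemma min_wt_le:
  fixes C :: "(('a::zero) ^ 'n) set"
  assumes "x \<in> C" "x $ i \<noteq> 0"
  shows "min_wt C i \<le> wt x"
proof -
  have "{wt c | c. c \<in> C \<and> c $ i \<noteq> 0} \<subseteq> {..CARD('n)}"
    by (auto intro: wt_le_card)
  then show ?thesis
    unfolding min_wt_def using assms by (intro Min_le) (auto intro: finite_subset)
qed

lemma min_wt_attained:
  fixes C :: "(('a::zero) ^ 'n) set"
  assumes "x \<in> C" "x $ i \<noteq> 0"
  obtains y where "y \<in> C" "y $ i \<noteq> 0" "wt y = min_wt C i"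
proof -
  let ?W = "{wt c | c. c \<in> C \<and> c $ i \<noteq> 0}"
  have "?W \<subseteq> {..CARD('n)}"
    by (auto intro: wt_le_card)
  then have "Min ?W \<in> ?W"
    using assms by (intro Min_in) (auto intro: finite_subset)
  then show ?thesis
    using that unfolding min_wt_def by auto
qed

lemma min_wt_pos:
  fixes C :: "(('a::zero) ^ 'n) set"
  assumes "x \<in> C" "x $ i \<noteq> 0"
  shows "0 < min_wt C i"
proof -
  obtain y where "y \<in> C" "y $ i \<noteq> 0" "wt y = min_wt C i"
    using min_wt_attained[OF assms] .
  then show ?thesis
    using wt_pos[of y i] by simp
qed

lemma dim_image_less_if_kills:
  fixes C :: "(('a::field) ^ 'n) set"
  assumes f: "Vector_Spaces.linear (*s) (*s) f" and "c \<in> C" "c \<noteq> 0" "f c = 0"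
  shows "vec.dim (f ` C) < vec.dim C"
proof -
  have "vec.independent {c}"
    using \<open>c \<noteq> 0\<close> by (simp add: vec.independent_insert)
  then obtain B where B: "{c} \<subseteq> B" "B \<subseteq> C" "vec.independent B" "C \<subseteq> vec.span B"
    using vec.maximal_independent_subset_extend[of "{c}" C] \<open>c \<in> C\<close> by blast
  then have "c \<in> B"
    by simp
  have "finite B"
    using B(3) vec.finiteI_independent by blast
  have "f ` B = insert 0 (f ` (B - {c}))"
    using \<open>c \<in> B\<close> \<open>f c = 0\<close> by auto
  have "f ` C \<subseteq> f ` vec.span B"
    using B(4) by blast
  also have "\<dots> = vec.span (f ` B)"
    using vec.linear_span_image[OF f] by blast
  also have "\<dots> = vec.span (f ` (B - {c}))"
    using \<open>f ` B = _\<close> by simp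
  finally have "vec.dim (f ` C) \<le> card (f ` (B - {c}))"
    using vec.dim_le_card \<open>finite B\<close> by blast
  also have "\<dots> \<le> card (B - {c})"
    using \<open>finite B\<close> card_image_le by blast
  also have "\<dots> < card B"
    using \<open>finite B\<close> \<open>c \<in> B\<close> by (rule card_Diff1_less)
  also have "\<dots> = vec.dim C"
    using vec.basis_card_eq_dim[OF B(2) B(4) B(3)] .
  finally show ?thesis .
qed

lemma sum_support_inverse_min_wt_le_one:
  fixes C :: "(('a::zero) ^ 'n) set"
  assumes "c \<in> C" "c \<noteq> 0" and least: "\<And>y. y \<in> C \<Longrightarrow> y \<noteq> 0 \<Longrightarrow> wt c \<le> wt y"
  shows "(\<Sum>i\<in>support c. 1 / real (min_wt C i)) \<le> 1"
proof -
  have "card (support c) \<noteq> 0"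
    using \<open>c \<noteq> 0\<close> by (auto simp: support_def vec_eq_iff)
  then have "0 < real (card (support c))"
    by linarith
  have "(\<Sum>i\<in>support c. 1 / real (min_wt C i)) \<le> (\<Sum>i\<in>support c. 1 / real (card (support c)))"
  proof (rule sum_mono)
    fix i assume "i \<in> support c"
    then obtain y where "y \<in> C" "y $ i \<noteq> 0" "wt y = min_wt C i"
      using min_wt_attained[OF \<open>c \<in> C\<close>] by (auto simp: support_def)
    moreover have "y \<noteq> 0"
      using \<open>y $ i \<noteq> 0\<close> by auto
    ultimately have "card (support c) \<le> min_wt C i"
      using least[of y] by (simp add: wt_eq_card_support)
    then show "1 / real (min_wt C i) \<le> 1 / real (card (support c))"
      using \<open>0 < real (card (support c))\<close> by (simp add: frac_le)
  qed
  also have "\<dots> = 1"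
    using \<open>card (support c) \<noteq> 0\<close> by simp
  finally show ?thesis .
qed

lemma code_support_zero_on:
  "code_support C - S \<subseteq> code_support (zero_on S ` C)"
proof
  fix i assume "i \<in> code_support C - S"
  then obtain c where "c \<in> C" "c $ i \<noteq> 0" "i \<notin> S"
    by (auto simp: code_support_def)
  then have "zero_on S c \<in> zero_on S ` C" "zero_on S c $ i \<noteq> 0"
    by (simp_all add: zero_on_nth_notin)
  then show "i \<in> code_support (zero_on S ` C)"
    unfolding code_support_def by blast
qed

lemma min_wt_zero_on_le:
  assumes "i \<in> code_support C - S"
  shows "min_wt (zero_on S ` C) i \<le> min_wt C i"
proof -
  obtain x where "x \<in> C" "x $ i \<noteq> 0"
    using assms by (auto simp: code_support_def)
  then obtain y where y: "y \<in> C" "y $ i \<noteq> 0" "wt y = min_wt C i"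
    by (rule min_wt_attained)
  have "zero_on S y \<in> zero_on S ` C" "zero_on S y $ i \<noteq> 0"
    using y assms by (auto simp: zero_on_nth_notin)
  then have "min_wt (zero_on S ` C) i \<le> wt (zero_on S y)"
    by (rule min_wt_le)
  also have "\<dots> \<le> min_wt C i"
    using wt_zero_on_le[of S y] y(3) by simp
  finally show ?thesis .
qed

lemma sum_inverse_min_wt_zero_on_le:
  "(\<Sum>i\<in>code_support C - S. 1 / real (min_wt C i))
     \<le> (\<Sum>i\<in>code_support (zero_on S ` C). 1 / real (min_wt (zero_on S ` C) i))"
proof -
  have "(\<Sum>i\<in>code_support C - S. 1 / real (min_wt C i))
      \<le> (\<Sum>i\<in>code_support C - S. 1 / real (min_wt (zero_on S ` C) i))"
  proof (rule sum_mono)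
    fix i assume i: "i \<in> code_support C - S"
    then obtain x where "x \<in> zero_on S ` C" "x $ i \<noteq> 0"
      using code_support_zero_on unfolding code_support_def by blast
    then have "0 < min_wt (zero_on S ` C) i"
      by (rule min_wt_pos)
    then show "1 / real (min_wt C i) \<le> 1 / real (min_wt (zero_on S ` C) i)"
      using min_wt_zero_on_le[OF i] by (simp add: frac_le)
  qed
  also have "\<dots> \<le> (\<Sum>i\<in>code_support (zero_on S ` C). 1 / real (min_wt (zero_on S ` C) i))"
    using code_support_zero_on by (intro sum_mono2) auto
  finally show ?thesis .
qed

lemma sum_inverse_min_wt_le_dim:
  fixes C :: "(('a::field) ^ 'n) set"
  assumes "vec.subspace C"
  shows "(\<Sum>i\<in>code_support C. 1 / real (min_wt C i)) \<le> real (vec.dim C)"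
  using assms
proof (induction "vec.dim C" arbitrary: C rule: less_induct)
  case (less C)
  show ?case
  proof (cases "\<exists>c\<in>C. c \<noteq> 0")
    case False
    then have "code_support C = {}"
      by (auto simp: code_support_def)
    then show ?thesis
      by simp
  next
    case True
    then obtain c where c: "c \<in> C" "c \<noteq> 0" and least: "\<And>y. y \<in> C \<Longrightarrow> y \<noteq> 0 \<Longrightarrow> wt c \<le> wt y"
      using ex_has_least_nat[of "\<lambda>x. x \<in> C \<and> x \<noteq> 0" _ wt] by blast
    define S where "S = support c"
    define C' where "C' = zero_on S ` C"
    have "vec.subspace C'"
      unfolding C'_def using vec.linear_subspace_image[OF linear_zero_on less.prems] .
    moreover have dim_less: "vec.dim C' < vec.dim C"
      unfolding C'_def S_def
      using dim_image_less_if_kills[OF linear_zero_on c zero_on_support_self] .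
    ultimately have IH: "(\<Sum>i\<in>code_support C'. 1 / real (min_wt C' i)) \<le> real (vec.dim C')"
      using less.hyps by blast
    have "S \<subseteq> code_support C"
      using c by (auto simp: S_def support_def code_support_def)
    then have split: "(\<Sum>i\<in>code_support C. 1 / real (min_wt C i))
        = (\<Sum>i\<in>S. 1 / real (min_wt C i)) + (\<Sum>i\<in>code_support C - S. 1 / real (min_wt C i))"
      by (simp add: sum.subset_diff add.commute)
    have on_S: "(\<Sum>i\<in>S. 1 / real (min_wt C i)) \<le> 1"
      unfolding S_def using sum_support_inverse_min_wt_le_one[OF c least] .
    have off_S: "(\<Sum>i\<in>code_support C - S. 1 / real (min_wt C i)) \<le> real (vec.dim C')"
      using sum_inverse_min_wt_zero_on_le[of C S] IH unfolding C'_def by linarith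
    show ?thesis
      using split on_S off_S dim_less by linarith
  qed
qed

theorem claim5p4:
  fixes C :: "(('a::{field,finite}) ^ 'n) set" and k :: nat
  assumes "vec.subspace C"
    and "vec.dim C = k"
  shows "(\<Sum>i\<in>{i. \<exists>c\<in>C. c $ i \<noteq> 0}.
            1 / real (Min {wt c | c. c \<in> C \<and> c $ i \<noteq> 0})) \<le> real k"
  using sum_inverse_min_wt_le_dim[OF assms(1)] assms(2)
  unfolding code_support_def min_wt_def by simp

end
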